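(* Let $\mathbf{L}=(L,\le)$ be a nontrivial finite join-semilattice with greatest element $1$ satisfying property $( * )$, and let $(R,\vee,\circ)$ be a subsemiring of $(\mathrm{JM}_1(\mathbf{L}),\vee,\circ)$ such that $f_{a,b}\in R$ for all $a\in L\setminus\{1\}$, $b\in L$, and every $f\in R$ satisfies $f_{a,b}\le f$ for some $a\in L\setminus\{1\}$, $b\in L$. Then $(R,\vee)$ has a neutral element if and only if $1$ is join-irreducible and $\mathbf{L}$ is a lattice. If this neutral element exists, it is neither left nor right absorbing in $(R,\vee,\circ)$.
   Context: $\mathrm{JM}_1(\mathbf{L})$ is the set of maps $f:L\to L$ preserving binary joins with $f(1)=1$, a semiring under pointwise join and composition, ordered pointwise. $f_{a,b}(x)=b$ if $x\le a$ and $1$ otherwise. $\mathbf{L}$ satisfies $( * )$ if there exists $u\in L$ with $1\ne u\vee x$ for all $x\in L\setminus\{1\}$. $1$ is join-irreducible if $1\ne a\vee b$ for all $a,b\in L\setminus\{1\}$. A finite join-semilattice is a lattice iff it has a least element. An element $r$ is right absorbing if $s\circ r=r$ for all $s$, left absorbing if $r\circ s=r$ for all $s$. *)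

theory Defs
  imports Main
begin

definition JM1 :: "('a::{semilattice_sup,order_top} \<Rightarrow> 'a) set" where
  "JM1 = {f. (\<forall>x y. f (sup x y) = sup (f x) (f y)) \<and> f top = top}"

definition fab :: "'a::order_top \<Rightarrow> 'a \<Rightarrow> 'a \<Rightarrow> 'a" where
  "fab a b = (\<lambda>x. if x \<le> a then b else top)"

definition star_prop :: "'a::{semilattice_sup,order_top} itself \<Rightarrow> bool" where
  "star_prop _ = (\<exists>u::'a. \<forall>x. x \<noteq> top \<longrightarrow> sup u x \<noteq> top)"

definition top_join_irreducible :: "'a::{semilattice_sup,order_top} itself \<Rightarrow> bool" where
  "top_join_irreducible _ = (\<forall>a b::'a. a \<noteq> top \<longrightarrow> b \<noteq> top \<longrightarrow> sup a b \<noteq> top)"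

definition is_lattice :: "'a::order itself \<Rightarrow> bool" where
  "is_lattice _ = (\<forall>x y::'a. \<exists>z. z \<le> x \<and> z \<le> y \<and> (\<forall>w. w \<le> x \<and> w \<le> y \<longrightarrow> w \<le> z))"

definition subsemiring_JM1 :: "('a::{semilattice_sup,order_top} \<Rightarrow> 'a) set \<Rightarrow> bool" where
  "subsemiring_JM1 R = (R \<noteq> {} \<and> R \<subseteq> JM1 \<and> (\<forall>f\<in>R. \<forall>g\<in>R. sup f g \<in> R \<and> f \<circ> g \<in> R))"

definition join_neutral :: "('a \<Rightarrow> 'a::semilattice_sup) set \<Rightarrow> ('a \<Rightarrow> 'a) \<Rightarrow> bool" where
  "join_neutral R e = (e \<in> R \<and> (\<forall>f\<in>R. sup e f = f \<and> sup f e = f))"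

definition right_absorbing :: "('a \<Rightarrow> 'a) set \<Rightarrow> ('a \<Rightarrow> 'a) \<Rightarrow> bool" where
  "right_absorbing R r = (\<forall>s\<in>R. s \<circ> r = r)"

definition left_absorbing :: "('a \<Rightarrow> 'a) set \<Rightarrow> ('a \<Rightarrow> 'a) \<Rightarrow> bool" where
  "left_absorbing R r = (\<forall>s\<in>R. r \<circ> s = r)"

end

theory Submission
  imports Defs
begin

text \<open>A join-neutral element of R is its least element. Since every f_{a,b} with a \<noteq> 1 lies
  in R, such an element must map every x \<noteq> 1 to a least element of L (so L is a lattice), and
  since it dominates some f_{a,b}, all x \<noteq> 1 lie below the coatom a (so 1 is join-irreducible).
  Conversely, in that situation f_{m,0}, for the unique coatom m and the least element 0, lies
  below every map preserving 1. It is not absorbing because composing with the constant map 1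
  changes its value at any x \<noteq> 1.\<close>

lemma least_imp_is_lattice:
  fixes z :: "'a::{finite,semilattice_sup}"
  assumes "\<forall>x. z \<le> x"
  shows "is_lattice TYPE('a)"
  unfolding is_lattice_def
proof (intro allI)
  fix x y :: 'a
  let ?S = "{w. w \<le> x \<and> w \<le> y}"
  have "z \<in> ?S" using assms by simp
  then obtain m where m: "m \<in> ?S" "\<forall>b\<in>?S. m \<le> b \<longrightarrow> m = b"
    using finite_has_maximal[of ?S] finite by blast
  show "\<exists>z. z \<le> x \<and> z \<le> y \<and> (\<forall>w. w \<le> x \<and> w \<le> y \<longrightarrow> w \<le> z)"
  proof (intro exI conjI allI impI)
    show "m \<le> x" "m \<le> y" using m by auto
    fix w assume "w \<le> x \<and> w \<le> y"
    then have "sup w m \<in> ?S" using m by auto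
    then have "m = sup w m" using m(2) by simp
    then show "w \<le> m" by (metis sup.cobounded1)
  qed
qed

lemma is_lattice_imp_least:
  assumes "is_lattice TYPE('a::{finite,order})"
  shows "\<exists>z::'a. \<forall>x. z \<le> x"
proof -
  obtain z :: 'a where z: "\<forall>w. w \<le> z \<longrightarrow> z = w"
    using finite_has_minimal[of "UNIV::'a set"] finite by blast
  have "z \<le> x" for x
  proof -
    obtain w where "w \<le> x" "w \<le> z" using assms unfolding is_lattice_def by blast
    with z show ?thesis by metis
  qed
  then show ?thesis by blast
qed

lemma top_join_irreducible_iff_greatest_nontop:
  assumes "c \<noteq> (top::'a::{finite,semilattice_sup,order_top})"
  shows "top_join_irreducible TYPE('a) \<longleftrightarrow> (\<exists>m::'a. m \<noteq> top \<and> (\<forall>x. x \<noteq> top \<longrightarrow> x \<le> m))"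
proof
  assume tji: "top_join_irreducible TYPE('a)"
  let ?N = "{x::'a. x \<noteq> top}"
  obtain m where m: "m \<in> ?N" "\<forall>b\<in>?N. m \<le> b \<longrightarrow> m = b"
    using finite_has_maximal[of ?N] finite assms by blast
  have "\<forall>x. x \<noteq> top \<longrightarrow> x \<le> m"
  proof (intro allI impI)
    fix x :: 'a assume "x \<noteq> top"
    then have "sup x m \<noteq> top" using tji m(1) unfolding top_join_irreducible_def by auto
    then have "m = sup x m" using m(2) by simp
    then show "x \<le> m" by (metis sup.cobounded1)
  qed
  moreover have "m \<noteq> top" using m(1) by simp
  ultimately show "\<exists>m::'a. m \<noteq> top \<and> (\<forall>x. x \<noteq> top \<longrightarrow> x \<le> m)" by blast
next
  assume "\<exists>m::'a. m \<noteq> top \<and> (\<forall>x. x \<noteq> top \<longrightarrow> x \<le> m)"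
  then obtain m :: 'a where m: "m \<noteq> top" "\<forall>x. x \<noteq> top \<longrightarrow> x \<le> m" by blast
  show "top_join_irreducible TYPE('a)"
    unfolding top_join_irreducible_def
  proof (intro allI impI)
    fix a b :: 'a assume "a \<noteq> top" "b \<noteq> top"
    then have "sup a b \<le> m" using m(2) by simp
    then show "sup a b \<noteq> top" using m(1) top_unique by metis
  qed
qed

lemma JM1_top: "f \<in> JM1 \<Longrightarrow> f top = top"
  by (simp add: JM1_def)

lemma join_neutral_iff_least: "join_neutral R e \<longleftrightarrow> e \<in> R \<and> (\<forall>f\<in>R. e \<le> f)"
  by (auto simp: join_neutral_def le_iff_sup sup_commute)

lemma join_neutral_below_fab:
  assumes "\<forall>a b. a \<noteq> top \<longrightarrow> fab a b \<in> R" and "join_neutral R e" and "x \<noteq> top"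
  shows "e x \<le> b"
proof -
  have "e \<le> fab x b" using assms by (simp add: join_neutral_iff_least)
  then have "e x \<le> fab x b x" by (simp add: le_fun_def)
  then show ?thesis by (simp add: fab_def)
qed

lemma fab_le_JM1:
  assumes "\<forall>x. z \<le> x" and "\<forall>x. x \<noteq> top \<longrightarrow> x \<le> m" and "f \<in> JM1"
  shows "fab m z \<le> f"
proof (rule le_funI)
  fix x
  show "fab m z x \<le> f x"
  proof (cases "x = top")
    case True
    then show ?thesis using JM1_top[OF assms(3)] by simp
  next
    case False
    then show ?thesis using assms(1,2) by (simp add: fab_def)
  qed
qed

lemma join_neutral_imp_greatest_nontop:
  fixes R :: "('a::{semilattice_sup,order_top} \<Rightarrow> 'a) set" and c :: 'a
  assumes contains: "\<forall>a b. a \<noteq> top \<longrightarrow> fab a b \<in> R"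
    and above: "\<forall>f\<in>R. \<exists>a b. a \<noteq> top \<and> fab a b \<le> f"
    and e: "join_neutral R e" and c: "c \<noteq> top"
  shows "\<exists>m::'a. m \<noteq> top \<and> (\<forall>x. x \<noteq> top \<longrightarrow> x \<le> m)"
proof -
  obtain a b where ab: "a \<noteq> top" "fab a b \<le> e"
    using above e by (auto simp: join_neutral_def)
  have "x \<le> a" if x: "x \<noteq> top" for x
  proof (rule ccontr)
    assume "\<not> x \<le> a"
    then have "fab a b x = top" by (simp add: fab_def)
    moreover have "fab a b x \<le> e x" using ab(2) by (simp add: le_fun_def)
    moreover have "e x \<le> c" using join_neutral_below_fab[OF contains e x] .
    ultimately show False using c by (simp add: top_unique)
  qed
  with ab(1) show ?thesis by blast
qed

lemma join_neutral_not_absorbing: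
  fixes R :: "('a::{semilattice_sup,order_top} \<Rightarrow> 'a) set" and c :: 'a
  assumes contains: "\<forall>a b. a \<noteq> top \<longrightarrow> fab a b \<in> R" and "R \<subseteq> JM1"
    and e: "join_neutral R e" and c: "c \<noteq> top"
  shows "\<not> left_absorbing R e \<and> \<not> right_absorbing R e"
proof -
  let ?one = "fab c top"
  have one: "?one \<in> R" "\<And>x. ?one x = top" using contains c by (blast, simp add: fab_def)
  have "e c \<noteq> top" using join_neutral_below_fab[OF contains e c, of c] c top_unique by metis
  moreover have "e top = top" using e assms(2) by (auto simp: join_neutral_def JM1_top)
  ultimately have "e \<circ> ?one \<noteq> e" "?one \<circ> e \<noteq> e" using one(2) by (metis comp_apply)+
  then show ?thesis using one(1) unfolding left_absorbing_def right_absorbing_def by blast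
qed

theorem proposition7p3:
  fixes R :: "('a::{finite,semilattice_sup,order_top} \<Rightarrow> 'a) set"
  assumes nontriv: "\<exists>x y::'a. x \<noteq> y"
    and star: "star_prop TYPE('a)"
    and sub: "subsemiring_JM1 R"
    and contains: "\<forall>a b::'a. a \<noteq> top \<longrightarrow> fab a b \<in> R"
    and above: "\<forall>f\<in>R. \<exists>a b::'a. a \<noteq> top \<and> fab a b \<le> f"
  shows "((\<exists>e. join_neutral R e) \<longleftrightarrow> (top_join_irreducible TYPE('a) \<and> is_lattice TYPE('a)))
    \<and> (\<forall>e. join_neutral R e \<longrightarrow> \<not> left_absorbing R e \<and> \<not> right_absorbing R e)"
proof -
  obtain c :: 'a where c: "c \<noteq> top" using nontriv by metis
  have RJM1: "R \<subseteq> JM1" using sub by (simp add: subsemiring_JM1_def)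
  have "top_join_irreducible TYPE('a) \<and> is_lattice TYPE('a)" if e: "join_neutral R e" for e
  proof
    show "top_join_irreducible TYPE('a)"
      using join_neutral_imp_greatest_nontop[OF contains above e c]
      by (simp add: top_join_irreducible_iff_greatest_nontop[OF c])
    show "is_lattice TYPE('a)"
      using least_imp_is_lattice join_neutral_below_fab[OF contains e c] by blast
  qed
  moreover have "\<exists>e. join_neutral R e"
    if tji: "top_join_irreducible TYPE('a)" and lat: "is_lattice TYPE('a)"
  proof -
    obtain z :: 'a where z: "\<forall>x. z \<le> x" using is_lattice_imp_least[OF lat] by blast
    obtain m :: 'a where m: "m \<noteq> top" "\<forall>x. x \<noteq> top \<longrightarrow> x \<le> m"
      using tji top_join_irreducible_iff_greatest_nontop[OF c] by blast
    have "join_neutral R (fab m z)"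
      using contains m fab_le_JM1[OF z m(2)] RJM1 by (auto simp: join_neutral_iff_least)
    then show ?thesis by blast
  qed
  ultimately show ?thesis using join_neutral_not_absorbing[OF contains RJM1 _ c] by blast
qed

end
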